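(* Let $X$ be a set, $B=(B,+,0)$ a unitary magma and $(A,k,q,s,p)$ a retraction point from $X$ to $B$. Then the map $\langle q,p\rangle\colon A\to X\times B$, $a\mapsto(q(a),p(a))$, is a bijection if and only if $q(k(x)+s(b))=x$ for all $x\in X$ and $b\in B$.
   Context: A unitary magma is a set with a binary operation $+$ and an element $0$ with $b+0=b=0+b$ for all $b$; morphisms preserve $+$ and $0$. Given a set $X$ and a unitary magma $B$, a retraction point from $X$ to $B$ is a tuple $(A,k,q,s,p)$ where $A=(A,+,0)$ is a unitary magma, $k\colon X\to A$ and $q\colon A\to X$ are maps, $s\colon B\to A$ and $p\colon A\to B$ are morphisms of unitary magmas, and $p(s(b))=b$, $q(k(x))=x$, $p(k(x))=0$, $q(s(b))=q(0)$, and $k(q(a))+s(p(a))=a$ for all $x\in X$, $b\in B$, $a\in A$. *)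

theory Defs
  imports Main
begin

definition unitary_magma :: "'a set \<Rightarrow> ('a \<Rightarrow> 'a \<Rightarrow> 'a) \<Rightarrow> 'a \<Rightarrow> bool" where
  "unitary_magma M add z \<longleftrightarrow>
     z \<in> M \<and> (\<forall>a\<in>M. \<forall>b\<in>M. add a b \<in> M) \<and>
     (\<forall>b\<in>M. add b z = b \<and> add z b = b)"

definition magma_hom ::
  "'a set \<Rightarrow> ('a \<Rightarrow> 'a \<Rightarrow> 'a) \<Rightarrow> 'a \<Rightarrow> 'b set \<Rightarrow> ('b \<Rightarrow> 'b \<Rightarrow> 'b) \<Rightarrow> 'b \<Rightarrow> ('a \<Rightarrow> 'b) \<Rightarrow> bool" where
  "magma_hom M addM zM N addN zN f \<longleftrightarrow>
     (\<forall>a\<in>M. f a \<in> N) \<and> (\<forall>a\<in>M. \<forall>b\<in>M. f (addM a b) = addN (f a) (f b)) \<and> f zM = zN"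

definition retraction_point ::
  "'x set \<Rightarrow> 'b set \<Rightarrow> ('b \<Rightarrow> 'b \<Rightarrow> 'b) \<Rightarrow> 'b \<Rightarrow>
   'a set \<Rightarrow> ('a \<Rightarrow> 'a \<Rightarrow> 'a) \<Rightarrow> 'a \<Rightarrow>
   ('x \<Rightarrow> 'a) \<Rightarrow> ('a \<Rightarrow> 'x) \<Rightarrow> ('b \<Rightarrow> 'a) \<Rightarrow> ('a \<Rightarrow> 'b) \<Rightarrow> bool" where
  "retraction_point X B addB zB A addA zA k q s p \<longleftrightarrow>
     unitary_magma A addA zA \<and>
     (\<forall>x\<in>X. k x \<in> A) \<and> (\<forall>a\<in>A. q a \<in> X) \<and>
     magma_hom B addB zB A addA zA s \<and> magma_hom A addA zA B addB zB p \<and>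
     (\<forall>b\<in>B. p (s b) = b) \<and> (\<forall>x\<in>X. q (k x) = x) \<and> (\<forall>x\<in>X. p (k x) = zB) \<and>
     (\<forall>b\<in>B. q (s b) = q zA) \<and> (\<forall>a\<in>A. addA (k (q a)) (s (p a)) = a)"

end

theory Submission
  imports Defs
begin

text \<open>Every element of A decomposes as a = k(q a) + s(p a), so \<open>\<langle>q,p\<rangle>\<close> is always injective
  and its only candidate preimage of (x, b) is k x + s b. Since p(k x + s b) = 0 + b = b,
  that candidate is a preimage exactly when q(k x + s b) = x.\<close>

context
  fixes X :: "'x set" and B :: "'b set" and addB :: "'b \<Rightarrow> 'b \<Rightarrow> 'b" and zB :: 'b
    and A :: "'a set" and addA :: "'a \<Rightarrow> 'a \<Rightarrow> 'a" and zA :: 'a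
    and k :: "'x \<Rightarrow> 'a" and q :: "'a \<Rightarrow> 'x" and s :: "'b \<Rightarrow> 'a" and p :: "'a \<Rightarrow> 'b"
  assumes retraction: "retraction_point X B addB zB A addA zA k q s p"
begin

lemma retraction_point_decomp: "a \<in> A \<Longrightarrow> addA (k (q a)) (s (p a)) = a"
  using retraction unfolding retraction_point_def by blast

lemma retraction_point_add_k_s_mem: "x \<in> X \<Longrightarrow> b \<in> B \<Longrightarrow> addA (k x) (s b) \<in> A"
  using retraction unfolding retraction_point_def unitary_magma_def magma_hom_def by blast

lemma retraction_point_pair_image_subset: "(\<lambda>a. (q a, p a)) ` A \<subseteq> X \<times> B"
  using retraction unfolding retraction_point_def magma_hom_def by blast

lemma retraction_point_inj_on_pair: "inj_on (\<lambda>a. (q a, p a)) A"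
  by (rule inj_onI) (metis retraction_point_decomp prod.inject)

lemma retraction_point_p_add_k_s:
  assumes "unitary_magma B addB zB" and "x \<in> X" and "b \<in> B"
  shows "p (addA (k x) (s b)) = b"
proof -
  have "p (addA (k x) (s b)) = addB (p (k x)) (p (s b))"
    using retraction assms(2,3)
    unfolding retraction_point_def magma_hom_def by blast
  also have "\<dots> = addB zB b"
    using retraction assms(2,3) unfolding retraction_point_def by simp
  also have "\<dots> = b"
    using assms(1,3) unfolding unitary_magma_def by blast
  finally show ?thesis .
qed

lemma retraction_point_pair_in_image_iff:
  assumes "unitary_magma B addB zB" and x: "x \<in> X" and b: "b \<in> B"
  shows "(x, b) \<in> (\<lambda>a. (q a, p a)) ` A \<longleftrightarrow> q (addA (k x) (s b)) = x"
proof
  assume "(x, b) \<in> (\<lambda>a. (q a, p a)) ` A"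
  then obtain a where "a \<in> A" and "q a = x" and "p a = b" by blast
  then have "addA (k x) (s b) = a" using retraction_point_decomp by blast
  with \<open>q a = x\<close> show "q (addA (k x) (s b)) = x" by simp
next
  assume "q (addA (k x) (s b)) = x"
  with retraction_point_p_add_k_s[OF assms] retraction_point_add_k_s_mem[OF x b]
  show "(x, b) \<in> (\<lambda>a. (q a, p a)) ` A"
    by (metis (no_types, lifting) image_eqI)
qed

end

theorem proposition2p2:
  fixes X :: "'x set" and B :: "'b set" and addB :: "'b \<Rightarrow> 'b \<Rightarrow> 'b" and zB :: 'b
    and A :: "'a set" and addA :: "'a \<Rightarrow> 'a \<Rightarrow> 'a" and zA :: 'a
    and k :: "'x \<Rightarrow> 'a" and q :: "'a \<Rightarrow> 'x" and s :: "'b \<Rightarrow> 'a" and p :: "'a \<Rightarrow> 'b"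
  assumes "unitary_magma B addB zB"
    and "retraction_point X B addB zB A addA zA k q s p"
  shows "bij_betw (\<lambda>a. (q a, p a)) A (X \<times> B) \<longleftrightarrow>
         (\<forall>x\<in>X. \<forall>b\<in>B. q (addA (k x) (s b)) = x)"
proof -
  have "bij_betw (\<lambda>a. (q a, p a)) A (X \<times> B) \<longleftrightarrow> X \<times> B \<subseteq> (\<lambda>a. (q a, p a)) ` A"
    using retraction_point_inj_on_pair[OF assms(2)]
      retraction_point_pair_image_subset[OF assms(2)]
    unfolding bij_betw_def by blast
  also have "\<dots> \<longleftrightarrow> (\<forall>x\<in>X. \<forall>b\<in>B. q (addA (k x) (s b)) = x)"
    using retraction_point_pair_in_image_iff[OF assms(2,1)] by blast
  finally show ?thesis .
qed

end
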